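(* Let $G$ be a nilpotent group such that $G/Z(G)$ contains a nontrivial divisible subgroup. Then $G$ contains a nontrivial divisible subgroup.
   Context: $Z(G)$ denotes the center of $G$. A group is divisible if every element has an $n$-th root in it for every integer $n\ge1$. *)

theory Defs
  imports "HOL-Algebra.Algebra"
begin

definition center :: "('a, 'b) monoid_scheme \<Rightarrow> 'a set" where
  "center G = {z \<in> carrier G. \<forall>x \<in> carrier G. z \<otimes>\<^bsub>G\<^esub> x = x \<otimes>\<^bsub>G\<^esub> z}"

definition commutators :: "('a, 'b) monoid_scheme \<Rightarrow> 'a set \<Rightarrow> 'a set \<Rightarrow> 'a set" where
  "commutators G H K = {x \<otimes>\<^bsub>G\<^esub> y \<otimes>\<^bsub>G\<^esub> inv\<^bsub>G\<^esub> x \<otimes>\<^bsub>G\<^esub> inv\<^bsub>G\<^esub> y | x y. x \<in> H \<and> y \<in> K}"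

fun lower_central :: "('a, 'b) monoid_scheme \<Rightarrow> nat \<Rightarrow> 'a set" where
  "lower_central G 0 = carrier G"
| "lower_central G (Suc n) = generate G (commutators G (lower_central G n) (carrier G))"

definition nilpotent :: "('a, 'b) monoid_scheme \<Rightarrow> bool" where
  "nilpotent G \<longleftrightarrow> group G \<and> (\<exists>n. lower_central G n = {\<one>\<^bsub>G\<^esub>})"

definition divisible_subgroup :: "'a set \<Rightarrow> ('a, 'b) monoid_scheme \<Rightarrow> bool" where
  "divisible_subgroup H G \<longleftrightarrow> subgroup H G \<and>
     (\<forall>h \<in> H. \<forall>n::nat. n \<ge> 1 \<longrightarrow> (\<exists>r \<in> H. r [^]\<^bsub>G\<^esub> n = h))"

end

theory Submission
  imports Defs
begin

(* Let K be the preimage in G of the nontrivial divisible subgroup of G/Z(G); K is not central.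
   Since G is nilpotent there is an i such that K does not centralize gamma_i but centralizes
   gamma_(i+1), so some g in gamma_i fails to commute with some element of K. All commutators [y,g]
   lie in gamma_(i+1) and hence commute with K, which makes x \<mapsto> [x,g] an anti-homomorphism
   on K; its image D is therefore a subgroup, nontrivial by the choice of g. The map is constant on
   cosets of Z(G), so an n-th root in G/Z(G) of the coset of x yields r with
   [r,g]^n = [r^n,g] = [x,g]: D is divisible. *)

definition commutator :: "('a, 'b) monoid_scheme \<Rightarrow> 'a \<Rightarrow> 'a \<Rightarrow> 'a" where
  "commutator G x y = x \<otimes>\<^bsub>G\<^esub> y \<otimes>\<^bsub>G\<^esub> inv\<^bsub>G\<^esub> x \<otimes>\<^bsub>G\<^esub> inv\<^bsub>G\<^esub> y"

context group begin

lemma inv_m_cancel [simp]: "x \<in> carrier G \<Longrightarrow> y \<in> carrier G \<Longrightarrow> inv x \<otimes> (x \<otimes> y) = y"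
  and m_inv_cancel [simp]: "x \<in> carrier G \<Longrightarrow> y \<in> carrier G \<Longrightarrow> x \<otimes> (inv x \<otimes> y) = y"
  by (simp_all flip: m_assoc)

lemma subgroup_center: "subgroup (center G) G"
proof (rule subgroupI)
  fix a b assume a: "a \<in> center G" and b: "b \<in> center G"
  then have ab: "a \<in> carrier G" "b \<in> carrier G"
    and comm: "\<And>x. x \<in> carrier G \<Longrightarrow> a \<otimes> x = x \<otimes> a \<and> b \<otimes> x = x \<otimes> b"
    by (auto simp: center_def)
  have "inv a \<otimes> x = x \<otimes> inv a" if x: "x \<in> carrier G" for x
  proof -
    have "inv a \<otimes> x = inv a \<otimes> (x \<otimes> a) \<otimes> inv a"
      using ab x by (simp add: m_assoc)
    also have "\<dots> = inv a \<otimes> (a \<otimes> x) \<otimes> inv a"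
      using x comm by simp
    also have "\<dots> = x \<otimes> inv a"
      using ab x by (simp add: m_assoc)
    finally show ?thesis .
  qed
  then show "inv a \<in> center G"
    using ab by (simp add: center_def)
  have "a \<otimes> b \<otimes> x = x \<otimes> (a \<otimes> b)" if x: "x \<in> carrier G" for x
    using ab x comm by (metis m_assoc)
  then show "a \<otimes> b \<in> center G"
    using ab by (simp add: center_def)
qed (auto simp: center_def)

lemma normal_center: "center G \<lhd> G"
proof (rule normal_invI[OF subgroup_center])
  fix x h assume x: "x \<in> carrier G" and h: "h \<in> center G"
  then have "x \<otimes> h \<otimes> inv x = h"
    by (simp add: center_def m_assoc)
  with h show "x \<otimes> h \<otimes> inv x \<in> center G" by simp
qed

lemma commutator_closed [simp]:
  "x \<in> carrier G \<Longrightarrow> y \<in> carrier G \<Longrightarrow> commutator G x y \<in> carrier G"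
  by (simp add: commutator_def)

lemma inv_commutator:
  "x \<in> carrier G \<Longrightarrow> y \<in> carrier G \<Longrightarrow> inv (commutator G x y) = commutator G y x"
  by (simp add: commutator_def inv_mult_group m_assoc)

lemma commutator_eq_one_iff:
  assumes "x \<in> carrier G" "y \<in> carrier G"
  shows "commutator G x y = \<one> \<longleftrightarrow> x \<otimes> y = y \<otimes> x"
proof -
  have "commutator G x y = x \<otimes> y \<otimes> inv (y \<otimes> x)"
    using assms by (simp add: commutator_def inv_mult_group m_assoc)
  then show ?thesis
    using assms by (simp add: inv_solve_right')
qed

lemma commutator_one_left [simp]: "y \<in> carrier G \<Longrightarrow> commutator G \<one> y = \<one>"
  by (simp add: commutator_def)

lemma commutator_mult_left:
  assumes "x \<in> carrier G" "y \<in> carrier G" "g \<in> carrier G"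
    and "x \<otimes> commutator G y g = commutator G y g \<otimes> x"
  shows "commutator G (x \<otimes> y) g = commutator G y g \<otimes> commutator G x g"
proof -
  have "commutator G (x \<otimes> y) g = x \<otimes> commutator G y g \<otimes> (g \<otimes> inv x \<otimes> inv g)"
    using assms(1-3) by (simp add: commutator_def inv_mult_group m_assoc)
  also have "\<dots> = commutator G y g \<otimes> commutator G x g"
    using assms by (simp add: commutator_def m_assoc)
  finally show ?thesis .
qed

lemma commutator_pow_left:
  assumes "x \<in> carrier G" "g \<in> carrier G"
    and "x \<otimes> commutator G x g = commutator G x g \<otimes> x"
  shows "commutator G (x [^] n) g = commutator G x g [^] (n::nat)"
proof (induction n)
  case (Suc n)
  have "x \<otimes> commutator G x g [^] n = commutator G x g [^] n \<otimes> x"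
    using assms by (simp add: group_commutes_pow)
  then have "commutator G (x \<otimes> x [^] n) g = commutator G x g [^] n \<otimes> commutator G x g"
    using assms Suc by (simp add: commutator_mult_left)
  then show ?case using assms(1) by (metis nat_pow_Suc nat_pow_Suc2)
qed (simp add: assms)

lemma commutator_center_left:
  assumes "z \<in> center G" "x \<in> carrier G" "g \<in> carrier G"
  shows "commutator G (z \<otimes> x) g = commutator G x g"
proof -
  have z: "z \<in> carrier G" "\<And>a. a \<in> carrier G \<Longrightarrow> z \<otimes> a = a \<otimes> z"
    using assms(1) by (auto simp: center_def)
  then have "commutator G z g = \<one>"
    using assms(3) by (simp add: commutator_eq_one_iff)
  then show ?thesis
    using assms(2,3) z by (simp add: commutator_mult_left)
qed

lemma lower_central_subgroup: "subgroup (lower_central G n) G"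
proof (induction n)
  case (Suc n)
  then have "commutators G (lower_central G n) (carrier G) \<subseteq> carrier G"
    by (auto simp: commutators_def dest: subgroup.mem_carrier)
  then show ?case by (simp add: generate_is_subgroup)
qed (simp add: subgroup_self)

lemma commutator_in_lower_central_Suc:
  "x \<in> lower_central G n \<Longrightarrow> y \<in> carrier G \<Longrightarrow> commutator G x y \<in> lower_central G (Suc n)"
  by (auto simp: commutators_def commutator_def intro!: generate.incl)

lemma commutator_in_lower_central_Suc_right:
  assumes "x \<in> carrier G" "y \<in> lower_central G n"
  shows "commutator G x y \<in> lower_central G (Suc n)"
proof -
  have "y \<in> carrier G"
    using assms(2) subgroup.mem_carrier[OF lower_central_subgroup] by blast
  moreover have "inv (commutator G y x) \<in> lower_central G (Suc n)"
    using assms by (intro subgroup.m_inv_closed[OF lower_central_subgroup] commutator_in_lower_central_Suc)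
  ultimately show ?thesis
    using assms(1) by (simp add: inv_commutator)
qed

lemma lower_central_centralizer_step:
  assumes "lower_central G N = {\<one>}" "K \<subseteq> carrier G" "\<not> K \<subseteq> center G"
  obtains x g i where "x \<in> K" "g \<in> lower_central G i" "x \<otimes> g \<noteq> g \<otimes> x"
    and "\<And>x h. x \<in> K \<Longrightarrow> h \<in> lower_central G (Suc i) \<Longrightarrow> x \<otimes> h = h \<otimes> x"
proof -
  define centralizes where
    "centralizes n \<longleftrightarrow> (\<forall>x\<in>K. \<forall>h\<in>lower_central G n. x \<otimes> h = h \<otimes> x)" for n
  have "\<not> centralizes 0"
    using assms(2,3) by (auto simp: centralizes_def center_def)
  moreover have "centralizes N"
    using assms(1,2) by (auto simp: centralizes_def)
  ultimately obtain i where "\<not> centralizes i" "centralizes (Suc i)"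
    using ex_least_nat_less[of centralizes N] by blast
  then show thesis
    using that unfolding centralizes_def by blast
qed

lemma subgroup_commutator_image:
  assumes "subgroup K G" and g: "g \<in> carrier G"
    and comm: "\<And>x y. x \<in> K \<Longrightarrow> y \<in> K \<Longrightarrow> x \<otimes> commutator G y g = commutator G y g \<otimes> x"
  shows "subgroup ((\<lambda>x. commutator G x g) ` K) G"
proof (rule subgroupI)
  interpret K: subgroup K G by fact
  show "(\<lambda>x. commutator G x g) ` K \<subseteq> carrier G"
    using g by auto
  show "(\<lambda>x. commutator G x g) ` K \<noteq> {}"
    using K.one_closed by blast
  fix a b assume "a \<in> (\<lambda>x. commutator G x g) ` K" "b \<in> (\<lambda>x. commutator G x g) ` K"
  then obtain x y where xy: "x \<in> K" "y \<in> K" and a: "a = commutator G x g" and b: "b = commutator G y g"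
    by blast
  have "a \<otimes> b = commutator G (y \<otimes> x) g"
    unfolding a b using commutator_mult_left[OF K.mem_carrier K.mem_carrier g comm] xy by simp
  then show "a \<otimes> b \<in> (\<lambda>x. commutator G x g) ` K"
    using xy by simp
  have "a \<otimes> commutator G (inv x) g = commutator G (inv x \<otimes> x) g"
    unfolding a using commutator_mult_left[OF K.mem_carrier K.mem_carrier g comm, of "inv x" x] xy
    by simp
  also have "\<dots> = \<one>"
    using xy g by simp
  finally have "a \<otimes> commutator G (inv x) g = \<one>" .
  then have "inv a = commutator G (inv x) g"
    using inv_equality[OF inv_comm] a xy g by simp
  then show "inv a \<in> (\<lambda>x. commutator G x g) ` K"
    using xy by simp
qed

lemma divisible_commutator_image:
  assumes "subgroup K G" and g: "g \<in> carrier G"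
    and comm: "\<And>x y. x \<in> K \<Longrightarrow> y \<in> K \<Longrightarrow> x \<otimes> commutator G y g = commutator G y g \<otimes> x"
    and roots: "\<And>x (n::nat). x \<in> K \<Longrightarrow> n \<ge> 1 \<Longrightarrow> \<exists>r\<in>K. \<exists>z\<in>center G. r [^] n = z \<otimes> x"
  shows "divisible_subgroup ((\<lambda>x. commutator G x g) ` K) G"
  unfolding divisible_subgroup_def
proof (intro conjI ballI allI impI)
  interpret K: subgroup K G by fact
  show "subgroup ((\<lambda>x. commutator G x g) ` K) G"
    using assms(1) g comm by (rule subgroup_commutator_image)
  fix d and n :: nat
  assume "d \<in> (\<lambda>x. commutator G x g) ` K" "n \<ge> 1"
  then obtain x where x: "x \<in> K" "d = commutator G x g"
    by blast
  obtain r z where r: "r \<in> K" "z \<in> center G" "r [^] n = z \<otimes> x"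
    using roots[OF x(1) \<open>n \<ge> 1\<close>] by blast
  have "commutator G r g [^] n = commutator G (r [^] n) g"
    using commutator_pow_left[OF K.mem_carrier[OF r(1)] g comm[OF r(1) r(1)]] by simp
  also have "\<dots> = d"
    using r x g by (simp add: commutator_center_left)
  finally show "\<exists>r\<in>(\<lambda>x. commutator G x g) ` K. r [^] n = d"
    using r by blast
qed

end

lemma (in group_hom) subgroup_vimage:
  assumes "subgroup S H" shows "subgroup (carrier G \<inter> h -` S) G"
  using assms by (intro G.subgroupI) (auto simp: subgroup.m_closed subgroup.m_inv_closed subgroup.one_closed)

lemma (in normal) divisible_FactGroup_lift_root:
  assumes "divisible_subgroup S (G Mod H)" "x \<in> carrier G" "H #> x \<in> S" "(n::nat) \<ge> 1"
  obtains r z where "r \<in> carrier G" "H #> r \<in> S" "z \<in> H" "r [^] n = z \<otimes> x"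
proof -
  obtain R where R: "R \<in> S" "R [^]\<^bsub>G Mod H\<^esub> n = H #> x"
    using assms unfolding divisible_subgroup_def by blast
  moreover have "subgroup S (G Mod H)"
    using assms(1) unfolding divisible_subgroup_def by blast
  ultimately have "R \<in> carrier (G Mod H)"
    using subgroup.mem_carrier by metis
  then obtain r where r: "r \<in> carrier G" "R = H #> r"
    by (auto simp: carrier_FactGroup)
  then have "H #> (r [^] n) = H #> x"
    using R by (simp add: FactGroup_pow)
  then have "r [^] n \<in> H #> x"
    using r by (simp add: repr_independenceD subgroup_axioms)
  then obtain z where "z \<in> H" "r [^] n = z \<otimes> x"
    unfolding r_coset_def by blast
  then show thesis
    using that r R by blast
qed

lemma (in normal) FactGroup_subgroup_eq_one_if_vimage_subset:
  assumes "subgroup S (G Mod H)" "carrier G \<inter> (\<lambda>a. H #> a) -` S \<subseteq> H"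
  shows "S = {\<one>\<^bsub>G Mod H\<^esub>}"
proof -
  interpret S: subgroup S "G Mod H" by fact
  have "C = H" if C: "C \<in> S" for C
  proof -
    obtain a where "a \<in> carrier G" "C = H #> a"
      using S.mem_carrier[OF C] by (auto simp: carrier_FactGroup)
    then show ?thesis
      using C assms(2) rcos_const[OF is_group] by blast
  qed
  then show ?thesis
    using S.one_closed by fastforce
qed

lemma (in group) divisible_subgroup_from_FactGroup_center:
  assumes "nilpotent G"
    and H: "divisible_subgroup H (G Mod center G)" "H \<noteq> {\<one>\<^bsub>G Mod center G\<^esub>}"
  shows "\<exists>D. divisible_subgroup D G \<and> D \<noteq> {\<one>}"
proof -
  interpret Z: normal "center G" G by (rule normal_center)
  interpret q: group_hom G "G Mod center G" "\<lambda>a. center G #> a"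
    by (simp add: group_hom_def group_hom_axioms_def is_group Z.factorgroup_is_group Z.r_coset_hom_Mod)
  obtain N where N: "lower_central G N = {\<one>}"
    using assms(1) by (auto simp: nilpotent_def)
  define K where "K = carrier G \<inter> (\<lambda>a. center G #> a) -` H"
  have "subgroup K G"
    using H(1) unfolding K_def divisible_subgroup_def by (simp add: q.subgroup_vimage)
  then interpret K: subgroup K G .
  have "\<not> K \<subseteq> center G"
    using H Z.FactGroup_subgroup_eq_one_if_vimage_subset unfolding K_def divisible_subgroup_def by blast
  then obtain x0 g i where x0: "x0 \<in> K" and g: "g \<in> lower_central G i" and "x0 \<otimes> g \<noteq> g \<otimes> x0"
    and centralizes: "\<And>x h. x \<in> K \<Longrightarrow> h \<in> lower_central G (Suc i) \<Longrightarrow> x \<otimes> h = h \<otimes> x"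
    by (rule lower_central_centralizer_step[OF N K.subset]) blast
  have g_carrier: "g \<in> carrier G"
    using g subgroup.mem_carrier[OF lower_central_subgroup] by blast
  have "divisible_subgroup ((\<lambda>x. commutator G x g) ` K) G"
  proof (rule divisible_commutator_image[OF K.subgroup_axioms g_carrier])
    show "x \<otimes> commutator G y g = commutator G y g \<otimes> x" if "x \<in> K" "y \<in> K" for x y
      using centralizes[OF that(1) commutator_in_lower_central_Suc_right[OF K.mem_carrier[OF that(2)] g]] .
    show "\<exists>r\<in>K. \<exists>z\<in>center G. r [^] n = z \<otimes> x" if "x \<in> K" and n: "n \<ge> 1" for x and n :: nat
    proof -
      have x: "x \<in> carrier G" "center G #> x \<in> H"
        using that(1) unfolding K_def by auto
      obtain r z where "r \<in> carrier G" "center G #> r \<in> H" "z \<in> center G" "r [^] n = z \<otimes> x"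
        by (rule Z.divisible_FactGroup_lift_root[OF H(1) x n])
      then show ?thesis
        unfolding K_def by blast
    qed
  qed
  moreover have "commutator G x0 g \<noteq> \<one>"
    using \<open>x0 \<otimes> g \<noteq> g \<otimes> x0\<close> K.mem_carrier[OF x0] g_carrier by (simp add: commutator_eq_one_iff)
  ultimately show ?thesis
    using x0 by blast
qed

theorem mainTheorem3:
  assumes "group G"
    and "nilpotent G"
    and "\<exists>H. divisible_subgroup H (G Mod center G) \<and> H \<noteq> {\<one>\<^bsub>G Mod center G\<^esub>}"
  shows "\<exists>D. divisible_subgroup D G \<and> D \<noteq> {\<one>\<^bsub>G\<^esub>}"
  using assms group.divisible_subgroup_from_FactGroup_center by blast

end
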